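(* Let $A$ be a primitive set of composite numbers, and let $v\in(0,1)$. If $P(a)^{1+v}>a$ for all $a\in A$, then the sets $\mathrm{L}_{ac}$, ranging over pairs $(a,c)$ with $a\in A$ and $c\in C_a^v$, are pairwise disjoint (i.e. $\mathrm{L}_{ac}\cap\mathrm{L}_{a'c'}=\emptyset$ whenever $(a,c)\ne(a',c')$).
   Context: $P(a)$ denotes the largest prime factor of $a>1$, and $a^*=a/P(a)$. For an integer $m>1$, $\mathrm{L}_m=\{bm: b\in\mathbb{N},\ \text{every prime } p\mid b \text{ satisfies } p\ge P(m)\}$. For $a\in A$, $C_a^v=\{c\in\mathbb{N}:\ \text{every prime } p\mid c \text{ satisfies } P(a^* )\le p<P(a^* )^{1/\sqrt v}\}$ (note $1\in C_a^v$). A set is primitive if no member divides another. *)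

theory Defs
  imports Complex_Main "HOL-Computational_Algebra.Primes"
begin

text \<open>Largest prime factor P(a), meaningful for a > 1.\<close>
definition gpf :: "nat \<Rightarrow> nat" where
  "gpf a = Max (prime_factors a)"

definition astar :: "nat \<Rightarrow> nat" where
  "astar a = a div gpf a"

definition Lset :: "nat \<Rightarrow> nat set" where
  "Lset m = {b * m | b. b \<ge> 1 \<and> (\<forall>p. prime p \<and> p dvd b \<longrightarrow> p \<ge> gpf m)}"

definition Cset :: "nat \<Rightarrow> real \<Rightarrow> nat set" where
  "Cset a v = {c. c \<ge> 1 \<and> (\<forall>p. prime p \<and> p dvd c \<longrightarrow>
      gpf (astar a) \<le> p \<and> real p < real (gpf (astar a)) powr (1 / sqrt v))}"

definition primitive_set :: "nat set \<Rightarrow> bool" where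
  "primitive_set A \<longleftrightarrow> (\<forall>a\<in>A. \<forall>b\<in>A. a dvd b \<longrightarrow> a = b)"

definition composite :: "nat \<Rightarrow> bool" where
  "composite n \<longleftrightarrow> n > 1 \<and> \<not> prime n"

end

theory Submission
  imports Defs
begin

text \<open>
  Write \<open>a = x q\<close> with \<open>q = P(a)\<close>, \<open>x = a*\<close>, \<open>r = P(x)\<close>, and put \<open>s = 1/sqrt v\<close>.
  From \<open>P(a)^(1+v) > a\<close> we get \<open>x < q^v\<close>, hence \<open>r^(s^2) < q\<close>, and every \<open>n\<close> in \<open>L_ac\<close> is
  \<open>n = x q c b\<close> where the primes of \<open>x\<close> are at most \<open>r\<close>, those of \<open>c\<close> lie in \<open>[r, r^s)\<close>
  and those of \<open>b\<close> are at least \<open>q\<close>.  Take a second such factorisation \<open>n = x' q' c' b'\<close>.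
  If \<open>q < q'\<close>, then \<open>q\<close> divides \<open>x'\<close> or \<open>c'\<close>; were \<open>q > r'\<close>, it would divide \<open>c'\<close>, so
  \<open>q < r'^s\<close>, while \<open>r'\<close> divides \<open>x c\<close>, so \<open>r'^s \<le> r^(s^2) < q\<close>.  Thus \<open>q \<le> r'\<close>, and
  comparing prime factors gives \<open>x q | x'\<close>.  If \<open>q = q'\<close>, then \<open>x\<close> and \<open>x'\<close> are divisors of
  \<open>n\<close> whose primes lie below a threshold and whose cofactors have all primes above it, and
  such divisors are comparable.  Either way \<open>a | a'\<close> or \<open>a' | a\<close>, so \<open>a = a'\<close> by
  primitivity, and then \<open>c\<close> is the part of \<open>n/a\<close> made of primes below \<open>q\<close>.
\<close>

lemma coprime_if_prime_factors_separated:
  fixes d e t :: nat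
  assumes "d \<noteq> 0" "e \<noteq> 0" "\<forall>p\<in>prime_factors d. p < t" "\<forall>p\<in>prime_factors e. t \<le> p"
  shows "coprime d e"
proof (rule ccontr)
  assume "\<not> coprime d e"
  then obtain p where "prime p" "p dvd d" "p dvd e"
    using prime_factor_nat[of "gcd d e"] by (auto simp: coprime_iff_gcd_eq_1)
  then have "p \<in> prime_factors d" "p \<in> prime_factors e"
    using assms(1,2) by (simp_all add: in_prime_factors_iff)
  then show False
    using assms(3,4) by fastforce
qed

lemma smooth_rough_factorization_unique:
  fixes c b c' b' t :: nat
  assumes eq: "c * b = c' * b'" and "c \<noteq> 0" "b \<noteq> 0" "c' \<noteq> 0" "b' \<noteq> 0"
    and "\<forall>p\<in>prime_factors c. p < t" "\<forall>p\<in>prime_factors b. t \<le> p"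
    and "\<forall>p\<in>prime_factors c'. p < t" "\<forall>p\<in>prime_factors b'. t \<le> p"
  shows "c = c'"
proof (rule dvd_antisym)
  have "coprime c b'" "coprime c' b"
    using coprime_if_prime_factors_separated[of _ _ t] assms by simp_all
  then show "c dvd c'" "c' dvd c"
    using eq by (metis coprime_dvd_mult_left_iff dvd_triv_left)+
qed

lemma smooth_dvd_if_multiplicity_le:
  fixes d e d' e' t :: nat
  assumes prod: "d * e = d' * e'" "d * e \<noteq> 0"
    and d: "\<forall>p\<in>prime_factors d. p \<le> t" and e': "\<forall>p\<in>prime_factors e'. t \<le> p"
    and le: "multiplicity t d \<le> multiplicity t d'"
  shows "d dvd d'"
proof (rule multiplicity_le_imp_dvd)
  have nz: "d \<noteq> 0" "e \<noteq> 0" "d' \<noteq> 0" "e' \<noteq> 0"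
    using prod by (metis mult_zero_left mult_zero_right)+
  then show "d \<noteq> 0" by simp
  fix p :: nat assume p: "prime p"
  consider "p < t" | "p = t" | "t < p" by linarith
  then show "multiplicity p d \<le> multiplicity p d'"
  proof cases
    case 1
    then have "p \<notin> prime_factors e'" using e' by auto
    then have "\<not> p dvd e'" using p nz by (simp add: in_prime_factors_iff)
    then have "multiplicity p d' = multiplicity p (d' * e')"
      using p nz by (simp add: prime_elem_multiplicity_mult_distrib not_dvd_imp_multiplicity_0)
    also have "\<dots> = multiplicity p (d * e)" using prod(1) by simp
    also have "\<dots> = multiplicity p d + multiplicity p e"
      using p nz by (simp add: prime_elem_multiplicity_mult_distrib)
    finally show ?thesis by simp
  next
    case 2
    then show ?thesis using le by simp
  next
    case 3
    then have "p \<notin> prime_factors d" using d by auto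
    then have "\<not> p dvd d" using p nz by (simp add: in_prime_factors_iff)
    then show ?thesis by (simp add: not_dvd_imp_multiplicity_0)
  qed
qed

lemma smooth_divisors_comparable_if_le:
  fixes d e d' e' t t' :: nat
  assumes prod: "d * e = d' * e'" "d * e \<noteq> 0" and "t \<le> t'"
    and d: "\<forall>p\<in>prime_factors d. p \<le> t" and e: "\<forall>p\<in>prime_factors e. t \<le> p"
    and d': "\<forall>p\<in>prime_factors d'. p \<le> t'" and e': "\<forall>p\<in>prime_factors e'. t' \<le> p"
  shows "d dvd d' \<or> d' dvd d"
proof (cases "t = t'")
  case True
  then have "\<forall>p\<in>prime_factors e'. t \<le> p" "\<forall>p\<in>prime_factors d'. p \<le> t" using d' e' by auto
  then show ?thesis
    using smooth_dvd_if_multiplicity_le[OF prod d] smooth_dvd_if_multiplicity_le[OF prod(1)[symmetric] _ _ e] prod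
    by (metis le_cases)
next
  case False
  with \<open>t \<le> t'\<close> have "\<forall>p\<in>prime_factors d. p < t'" using d by fastforce
  moreover have "d \<noteq> 0" "e' \<noteq> 0" using prod by (metis mult_zero_left mult_zero_right)+
  ultimately have "coprime d e'" using e' by (intro coprime_if_prime_factors_separated) auto
  moreover have "d dvd d' * e'" using prod(1) by (metis dvd_triv_left)
  ultimately show ?thesis by (simp add: coprime_dvd_mult_left_iff)
qed

lemma smooth_divisors_comparable:
  fixes d e d' e' t t' :: nat
  assumes "d * e = d' * e'" "d * e \<noteq> 0"
    and "\<forall>p\<in>prime_factors d. p \<le> t" "\<forall>p\<in>prime_factors e. t \<le> p"
    and "\<forall>p\<in>prime_factors d'. p \<le> t'" "\<forall>p\<in>prime_factors e'. t' \<le> p"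
  shows "d dvd d' \<or> d' dvd d"
proof (cases "t \<le> t'")
  case True
  then show ?thesis using smooth_divisors_comparable_if_le assms by blast
next
  case False
  then show ?thesis using smooth_divisors_comparable_if_le[of d' e' d e t' t] assms by force
qed

lemma gpf_in_prime_factors: "1 < n \<Longrightarrow> gpf n \<in> prime_factors n"
  unfolding gpf_def
proof (rule Max_in)
  assume "1 < n"
  then obtain p where "prime p" "p dvd n" using prime_factor_nat[of n] by auto
  with \<open>1 < n\<close> have "p \<in> prime_factors n" by (simp add: in_prime_factors_iff)
  then show "prime_factors n \<noteq> {}" by blast
qed simp

lemma prime_gpf: "1 < n \<Longrightarrow> prime (gpf n)"
  using gpf_in_prime_factors by blast

lemma gpf_dvd: "1 < n \<Longrightarrow> gpf n dvd n"
  using gpf_in_prime_factors by blast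

lemma le_gpf: "p \<in> prime_factors n \<Longrightarrow> p \<le> gpf n"
  unfolding gpf_def by (rule Max_ge) simp_all

lemma gpf_mult_eq:
  assumes "1 < n" "0 < m" "\<forall>p\<in>prime_factors m. p \<le> gpf n"
  shows "gpf (n * m) = gpf n"
proof (rule antisym)
  have pf: "prime_factors (n * m) = prime_factors n \<union> prime_factors m"
    using assms(1,2) by (simp add: prime_factors_product)
  have "1 < n * m" using assms(1,2) by (simp add: less_le_trans)
  then have "gpf (n * m) \<in> prime_factors n \<union> prime_factors m"
    using gpf_in_prime_factors pf by blast
  then show "gpf (n * m) \<le> gpf n" using assms(3) le_gpf by blast
  show "gpf n \<le> gpf (n * m)" using gpf_in_prime_factors[OF assms(1)] pf le_gpf by blast
qed

lemma astar_mult_gpf: "1 < n \<Longrightarrow> astar n * gpf n = n"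
  unfolding astar_def by (simp add: gpf_dvd)

lemma one_less_astar:
  assumes "composite n"
  shows "1 < astar n"
proof -
  have n: "1 < n" "\<not> prime n" using assms unfolding composite_def by auto
  have "astar n * gpf n = n" using astar_mult_gpf[OF n(1)] .
  then have "astar n \<noteq> 0" "astar n \<noteq> 1"
    using n prime_gpf[OF n(1)] by auto
  then show ?thesis by linarith
qed

text \<open>With \<open>x = a*\<close>, \<open>q = P(a)\<close> and \<open>s = 1/sqrt v\<close>, these are the conditions that the
  hypotheses of the theorem and \<open>c \<in> C_a^v\<close> impose on \<open>a = x q\<close> and \<open>c\<close>.\<close>

definition admissible :: "real \<Rightarrow> nat \<Rightarrow> nat \<Rightarrow> nat \<Rightarrow> bool" where
  "admissible s x q c \<longleftrightarrow> prime q \<and> 1 < x \<and> 0 < c \<and> real (gpf x) powr (s * s) < real q \<and>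
     (\<forall>p\<in>prime_factors c. gpf x \<le> p \<and> real p < real (gpf x) powr s)"

lemma admissible_powr_bounds:
  assumes "1 \<le> s" "admissible s x q c"
  shows "real (gpf x) \<le> real (gpf x) powr s" "real (gpf x) powr s < real q"
proof -
  have r: "1 \<le> real (gpf x)"
    using assms(2) prime_gpf prime_ge_1_nat unfolding admissible_def by auto
  then show "real (gpf x) \<le> real (gpf x) powr s"
    using powr_mono[OF assms(1) r] by simp
  have "real (gpf x) powr s \<le> real (gpf x) powr (s * s)"
    using assms(1) r by (intro powr_mono) auto
  then show "real (gpf x) powr s < real q"
    using assms(2) unfolding admissible_def by linarith
qed

lemma admissible_gpf_less:
  assumes "1 \<le> s" "admissible s x q c"
  shows "gpf x < q"
  using admissible_powr_bounds[OF assms] by linarith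

lemma admissible_prime_factors_less:
  assumes "1 \<le> s" "admissible s x q c"
  shows "\<forall>p\<in>prime_factors c. p < q"
  using admissible_powr_bounds[OF assms] assms(2) unfolding admissible_def
  by (fastforce dest: bspec)

lemma admissible_prime_factors_eq:
  assumes "admissible s x q c" "admissible s x' q' c'" "0 < b" "0 < b'"
    and "x * q * c * b = x' * q' * c' * b'"
  shows "prime_factors x \<union> {q} \<union> prime_factors c \<union> prime_factors b
    = prime_factors x' \<union> {q'} \<union> prime_factors c' \<union> prime_factors b'"
proof -
  have "prime_factors (x * q * c * b) = prime_factors x \<union> {q} \<union> prime_factors c \<union> prime_factors b"
    if "admissible s x q c" "0 < b" for x q c b
    using that by (simp add: admissible_def prime_factors_product prime_prime_factors prime_gt_0_nat)
  from this[OF assms(1,3)] this[OF assms(2,4)] show ?thesis using assms(5) by simp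
qed

lemma admissible_le_gpf_if_less:
  assumes s: "1 \<le> s" and adm: "admissible s x q c" and adm': "admissible s x' q' c'"
    and b: "0 < b" "\<forall>p\<in>prime_factors b. q \<le> p" and b': "0 < b'" "\<forall>p\<in>prime_factors b'. q' \<le> p"
    and eq: "x * q * c * b = x' * q' * c' * b'" and "q < q'"
  shows "q \<le> gpf x'"
proof (rule ccontr)
  define r r' where "r = gpf x" and "r' = gpf x'"
  assume "\<not> q \<le> gpf x'"
  then have "r' < q" by (simp add: r'_def)
  note pf = admissible_prime_factors_eq[OF adm adm' b(1) b'(1) eq]
  have "q \<in> prime_factors x' \<union> {q'} \<union> prime_factors c' \<union> prime_factors b'" using pf by blast
  moreover have "q \<notin> prime_factors x'" using le_gpf \<open>r' < q\<close> r'_def by force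
  moreover have "q \<notin> prime_factors b'" using b'(2) \<open>q < q'\<close> by auto
  ultimately have "q \<in> prime_factors c'" using \<open>q < q'\<close> by blast
  then have "real q < real r' powr s" using adm' by (simp add: admissible_def r'_def)
  have "1 < x'" using adm' by (simp add: admissible_def)
  then have "r' \<in> prime_factors x \<union> {q} \<union> prime_factors c \<union> prime_factors b"
    using gpf_in_prime_factors pf r'_def by blast
  moreover have "r' \<notin> prime_factors b" using b(2) \<open>r' < q\<close> by auto
  ultimately have "r' \<in> prime_factors x \<union> prime_factors c" using \<open>r' < q\<close> by blast
  then have "real r' \<le> real r powr s"
  proof
    assume "r' \<in> prime_factors x"
    then have "real r' \<le> real r" using le_gpf r_def by simp
    then show ?thesis using admissible_powr_bounds(1)[OF s adm] unfolding r_def by linarith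
  next
    assume "r' \<in> prime_factors c"
    then show ?thesis using adm by (simp add: admissible_def r_def less_imp_le)
  qed
  then have "real r' powr s \<le> (real r powr s) powr s" using s by (intro powr_mono2) auto
  also have "\<dots> < real q" using adm by (simp add: admissible_def powr_powr r_def)
  finally show False using \<open>real q < real r' powr s\<close> by linarith
qed

lemma admissible_head_dvd_if_less:
  assumes s: "1 \<le> s" and adm: "admissible s x q c" and adm': "admissible s x' q' c'"
    and b: "0 < b" "\<forall>p\<in>prime_factors b. q \<le> p" and b': "0 < b'" "\<forall>p\<in>prime_factors b'. q' \<le> p"
    and eq: "x * q * c * b = x' * q' * c' * b'" and "q < q'"
  shows "x * q dvd x'"
proof -
  have "q \<le> gpf x'" using admissible_le_gpf_if_less[OF assms] .
  from adm have x: "1 < x" "prime q" unfolding admissible_def by auto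
  from adm' have x': "1 < x'" "prime q'" "0 < c'" and c': "\<forall>p\<in>prime_factors c'. gpf x' \<le> p"
    unfolding admissible_def by auto
  have x_below: "\<forall>p\<in>prime_factors x. p < q"
    using le_gpf admissible_gpf_less[OF s adm] le_less_trans by blast
  have "q \<in> prime_factors x' \<union> {q'} \<union> prime_factors c' \<union> prime_factors b'"
    using admissible_prime_factors_eq[OF adm adm' b(1) b'(1) eq] by blast
  moreover have "q \<notin> prime_factors b'" using b'(2) \<open>q < q'\<close> by auto
  ultimately have "q \<in> prime_factors x' \<union> prime_factors c'" using \<open>q < q'\<close> by blast
  then have "q dvd x'"
  proof
    assume "q \<in> prime_factors c'"
    then have "q = gpf x'" using c' \<open>q \<le> gpf x'\<close> by (meson le_antisym)
    then show ?thesis using gpf_dvd[OF x'(1)] by simp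
  qed auto
  moreover have "x dvd x'"
  proof -
    have "\<forall>p\<in>prime_factors (q' * c' * b'). q \<le> p"
      using \<open>q < q'\<close> \<open>q \<le> gpf x'\<close> c' b' x' by (auto simp: prime_factors_product prime_prime_factors prime_gt_0_nat)
    then have "coprime x (q' * c' * b')"
      using x_below x' b' x by (intro coprime_if_prime_factors_separated) (auto simp: prime_gt_0_nat)
    moreover have "x dvd x' * (q' * c' * b')" using eq by (metis dvd_triv_left mult.assoc)
    ultimately show ?thesis by (simp add: coprime_dvd_mult_left_iff)
  qed
  moreover have "coprime x q"
    using x_below x by (intro coprime_if_prime_factors_separated[where t = q]) (auto simp: prime_prime_factors prime_gt_0_nat)
  ultimately show ?thesis by (simp add: divides_mult)
qed

lemma admissible_heads_comparable:
  assumes s: "1 \<le> s" and adm: "admissible s x q c" and adm': "admissible s x' q' c'"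
    and b: "0 < b" "\<forall>p\<in>prime_factors b. q \<le> p" and b': "0 < b'" "\<forall>p\<in>prime_factors b'. q' \<le> p"
    and eq: "x * q * c * b = x' * q' * c' * b'"
  shows "x * q dvd x' * q' \<or> x' * q' dvd x * q"
proof -
  consider "q < q'" | "q' < q" | "q = q'" by linarith
  then show ?thesis
  proof cases
    case 1
    then show ?thesis using admissible_head_dvd_if_less[OF assms] by simp
  next
    case 2
    then show ?thesis using admissible_head_dvd_if_less[OF s adm' adm b' b eq[symmetric]] by simp
  next
    case 3
    have rough: "\<forall>p\<in>prime_factors (q * c * b). gpf x \<le> p"
      if "admissible s x q c" "0 < b" "\<forall>p\<in>prime_factors b. q \<le> p" for x q c b
      using that admissible_gpf_less[OF s that(1)]
      by (auto simp: admissible_def prime_factors_product prime_prime_factors prime_gt_0_nat)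
    have eq': "x * (q * c * b) = x' * (q' * c' * b')" using eq by (simp add: ac_simps)
    have nz: "x * (q * c * b) \<noteq> 0" using adm b unfolding admissible_def by (simp add: prime_gt_0_nat)
    have "x dvd x' \<or> x' dvd x"
      using smooth_divisors_comparable[OF eq' nz _ rough[OF adm b] _ rough[OF adm' b']] le_gpf by blast
    then show ?thesis using 3 by (auto intro: mult_dvd_mono)
  qed
qed

lemma admissible_if_Cset:
  assumes "composite a" "real a < real (gpf a) powr (1 + v)" "0 < v" "c \<in> Cset a v"
  shows "admissible (1 / sqrt v) (astar a) (gpf a) c"
proof -
  define x q r where "x = astar a" and "q = gpf a" and "r = gpf x"
  have a: "1 < a" using assms(1) unfolding composite_def by simp
  have x: "1 < x" using one_less_astar[OF assms(1)] x_def by simp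
  have q: "prime q" "1 < q" using prime_gpf[OF a] prime_gt_1_nat q_def by auto
  have "real x * real q < real q * real q powr v"
    using assms(2) astar_mult_gpf[OF a] q by (simp add: x_def q_def powr_add flip: of_nat_mult)
  then have x_less: "real x < real q powr v" using q by simp
  have "r \<le> x" using gpf_dvd[OF x] x r_def by (simp add: dvd_imp_le)
  have "real r powr (1 / sqrt v * (1 / sqrt v)) = real r powr (1 / v)"
    using assms(3) by simp
  also have "\<dots> \<le> real x powr (1 / v)"
    using \<open>r \<le> x\<close> assms(3) by (intro powr_mono2) auto
  also have "\<dots> < (real q powr v) powr (1 / v)"
    using x_less assms(3) by (intro powr_less_mono2) auto
  also have "\<dots> = real q" using assms(3) by (simp add: powr_powr)
  finally have "real r powr (1 / sqrt v * (1 / sqrt v)) < real q" .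
  moreover have "0 < c" "\<forall>p\<in>prime_factors c. r \<le> p \<and> real p < real r powr (1 / sqrt v)"
    using assms(4) unfolding Cset_def r_def x_def by auto
  ultimately show ?thesis
    using x q unfolding admissible_def x_def q_def r_def by simp
qed

lemma Lset_mult_CsetE:
  assumes "composite a" "real a < real (gpf a) powr (1 + v)" "0 < v" "v < 1"
    and "c \<in> Cset a v" "n \<in> Lset (a * c)"
  obtains b where "n = a * c * b" "0 < b" "\<forall>p\<in>prime_factors b. gpf a \<le> p"
proof -
  have adm: "admissible (1 / sqrt v) (astar a) (gpf a) c"
    using admissible_if_Cset assms(1-3,5) .
  have "1 < a" using assms(1) unfolding composite_def by simp
  moreover have "0 < c" using adm unfolding admissible_def by simp
  moreover have "\<forall>p\<in>prime_factors c. p \<le> gpf a"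
    using admissible_prime_factors_less[OF _ adm] assms(3,4) by (simp add: less_imp_le)
  ultimately have "gpf (a * c) = gpf a" by (rule gpf_mult_eq)
  with assms(6) show ?thesis
    using that unfolding Lset_def by (auto simp: mult.commute)
qed

theorem lemma3p1:
  fixes A :: "nat set" and v :: real
  assumes "primitive_set A"
    and "\<forall>a\<in>A. composite a"
    and "0 < v" and "v < 1"
    and "\<forall>a\<in>A. real (gpf a) powr (1 + v) > real a"
  shows "\<forall>a\<in>A. \<forall>c\<in>Cset a v. \<forall>a'\<in>A. \<forall>c'\<in>Cset a' v.
           (a, c) \<noteq> (a', c') \<longrightarrow> Lset (a * c) \<inter> Lset (a' * c') = {}"
proof (intro ballI impI equals0I)
  fix a c a' c' n
  assume a: "a \<in> A" "c \<in> Cset a v" and a': "a' \<in> A" "c' \<in> Cset a' v"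
    and "(a, c) \<noteq> (a', c')" and n: "n \<in> Lset (a * c) \<inter> Lset (a' * c')"
  have s: "1 \<le> 1 / sqrt v" using assms(3,4) by simp
  have hyps: "composite a" "real a < real (gpf a) powr (1 + v)"
    "composite a'" "real a' < real (gpf a') powr (1 + v)"
    using assms(2,5) a(1) a'(1) by simp_all
  note adm = admissible_if_Cset[OF hyps(1,2) assms(3) a(2)]
    and adm' = admissible_if_Cset[OF hyps(3,4) assms(3) a'(2)]
  obtain b where b: "n = a * c * b" "0 < b" "\<forall>p\<in>prime_factors b. gpf a \<le> p"
    using Lset_mult_CsetE[OF hyps(1,2) assms(3,4) a(2)] n by blast
  obtain b' where b': "n = a' * c' * b'" "0 < b'" "\<forall>p\<in>prime_factors b'. gpf a' \<le> p"
    using Lset_mult_CsetE[OF hyps(3,4) assms(3,4) a'(2)] n by blast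
  have "astar a * gpf a = a" "astar a' * gpf a' = a'"
    using hyps(1,3) by (simp_all add: astar_mult_gpf composite_def)
  moreover have "a * c * b = a' * c' * b'" using b(1) b'(1) by simp
  ultimately have "a dvd a' \<or> a' dvd a"
    using admissible_heads_comparable[OF s adm adm' b(2,3) b'(2,3)] by simp
  then have "a = a'" using assms(1) a a' unfolding primitive_set_def by blast
  then have "c * b = c' * b'" using b(1) b'(1) hyps(1) by (simp add: composite_def)
  then have "c = c'"
    by (rule smooth_rough_factorization_unique[where t = "gpf a"])
      (use adm adm' admissible_prime_factors_less[OF s adm] admissible_prime_factors_less[OF s adm'] b b' \<open>a = a'\<close>
        in \<open>auto simp: admissible_def\<close>)
  with \<open>a = a'\<close> \<open>(a, c) \<noteq> (a', c')\<close> show False by simp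
qed

end
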